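(* Let $G$ be a simple graph on $n$ vertices and let $k$ be an integer with $3\le k\le n-3$. If $G$ contains a path with $7$ vertices (as a subgraph), then $F_k(G)$ is non-planar.
   Context: For a simple graph $G=(V,E)$ on $n$ vertices and an integer $1\le k<n$, the $k$-token graph $F_k(G)$ is the graph whose vertices are all $k$-element subsets of $V$, two such subsets $A,B$ being adjacent whenever their symmetric difference $A\triangle B$ is a pair $\{a,b\}$ with $a$ adjacent to $b$ in $G$. *)

theory Defs
  imports "HOL-Analysis.Analysis"
begin

definition simple_graph :: "'a set \<Rightarrow> ('a \<Rightarrow> 'a \<Rightarrow> bool) \<Rightarrow> bool" where
  "simple_graph V E \<longleftrightarrow> finite V \<and> (\<forall>a b. E a b \<longrightarrow> E b a)
     \<and> (\<forall>a. \<not> E a a) \<and> (\<forall>a b. E a b \<longrightarrow> a \<in> V \<and> b \<in> V)"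

definition graph_edges :: "'b set \<Rightarrow> ('b \<Rightarrow> 'b \<Rightarrow> bool) \<Rightarrow> 'b set set" where
  "graph_edges W R = {{u, v} | u v. u \<in> W \<and> v \<in> W \<and> R u v}"

definition token_vertices :: "'a set \<Rightarrow> nat \<Rightarrow> 'a set set" where
  "token_vertices V k = {A. A \<subseteq> V \<and> card A = k}"

definition token_adj :: "('a \<Rightarrow> 'a \<Rightarrow> bool) \<Rightarrow> 'a set \<Rightarrow> 'a set \<Rightarrow> bool" where
  "token_adj E A B \<longleftrightarrow> (\<exists>a b. (A - B) \<union> (B - A) = {a, b} \<and> E a b)"

definition has_path_subgraph :: "'a set \<Rightarrow> ('a \<Rightarrow> 'a \<Rightarrow> bool) \<Rightarrow> nat \<Rightarrow> bool" where
  "has_path_subgraph V E m \<longleftrightarrow> (\<exists>xs. length xs = m \<and> distinct xs \<and> set xs \<subseteq> V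
     \<and> (\<forall>i. Suc i < m \<longrightarrow> E (xs ! i) (xs ! Suc i)))"

text \<open>Planarity: an embedding in the plane (identified with the complex plane):
  vertices go injectively to points, each edge to an arc joining the images of
  its endpoints and meeting no other vertex image, and two distinct edges meet
  only in images of common endpoints.\<close>
definition planar :: "'b set \<Rightarrow> ('b \<Rightarrow> 'b \<Rightarrow> bool) \<Rightarrow> bool" where
  "planar W R \<longleftrightarrow> (\<exists>(f :: 'b \<Rightarrow> complex) (g :: 'b set \<Rightarrow> real \<Rightarrow> complex).
      inj_on f W \<and>
      (\<forall>u\<in>W. \<forall>v\<in>W. R u v \<longrightarrow>
          arc (g {u, v}) \<and> {pathstart (g {u, v}), pathfinish (g {u, v})} = {f u, f v}
          \<and> path_image (g {u, v}) \<inter> f ` W = {f u, f v}) \<and>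
      (\<forall>e\<in>graph_edges W R. \<forall>e'\<in>graph_edges W R. e \<noteq> e' \<longrightarrow>
          path_image (g e) \<inter> path_image (g e') \<subseteq> f ` (e \<inter> e')))"

end

theory Submission
  imports Defs
begin

text \<open>The 3-token graph of the path 0 - 1 - ... - 6 contains an explicit subdivision of
  K_{3,3}. A path x_0, ..., x_6 in G embeds this token graph into F_k(G): a set A
  of positions goes to the tokens x_i (i in A) together with k - 3 fixed tokens off the path; when
  n = k + 3 there is no room for these, and A goes instead to the tokens at the positions outside A
  together with k - 4 fixed tokens. Hence F_k(G) contains a subdivided K_{3,3}.

  That K_{3,3} cannot be drawn with arcs in the plane follows from the Jordan curve theorem. The
  six arcs at two vertices a_0, a_1 of one side form a theta curve. The three arcs at the third
  vertex a_2, each stopped short of its endpoint, form a connected set disjoint from it, which thus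
  lies in one face; but a face of a theta curve is bordered by at most two of its three arcs, while
  the endpoints b_0, b_1, b_2 lie one on each arc.\<close>

lemma arc_image_diff:
  assumes "arc p" "S \<subseteq> {0..1}"
  shows "path_image p - p ` S = p ` ({0..1} - S)"
  using assms inj_on_image_set_diff[of p "{0..1}" "{0..1}" S] by (auto simp: arc_def path_image_def)

lemma arc_interior_eq:
  assumes "arc p"
  shows "path_image p - {pathstart p, pathfinish p} = p ` {0<..<1}"
proof -
  have "{0..1} - {0,1} = {0<..<1::real}" by auto
  then show ?thesis
    using arc_image_diff[OF assms, of "{0,1}"] by (simp add: pathstart_def pathfinish_def)
qed

lemma connected_arc_interior: "arc p \<Longrightarrow> connected (path_image p - {pathstart p, pathfinish p})"
  unfolding arc_interior_eq
  by (rule connected_continuous_image)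
     (auto simp: arc_def path_def intro: continuous_on_subset)

lemma arc_interior_nonempty: "arc p \<Longrightarrow> path_image p - {pathstart p, pathfinish p} \<noteq> {}"
  unfolding arc_interior_eq by auto

lemma arc_minus_finish_eq:
  assumes "arc p"
  shows "path_image p - {pathfinish p} = p ` {0..<1}"
proof -
  have "{0..1} - {1} = {0..<1::real}" by auto
  then show ?thesis
    using arc_image_diff[OF assms, of "{1}"] by (simp add: pathfinish_def)
qed

lemma connected_arc_minus_finish: "arc p \<Longrightarrow> connected (path_image p - {pathfinish p})"
  unfolding arc_minus_finish_eq
  by (rule connected_continuous_image)
     (auto simp: arc_def path_def intro: continuous_on_subset)

lemma arc_finish_in_closure:
  assumes "arc p"
  shows "pathfinish p \<in> closure (path_image p - {pathfinish p})"
proof -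
  have "continuous_on (closure {0..<1::real}) p"
    using assms by (auto simp: arc_def path_def)
  then have "p ` closure {0..<1::real} \<subseteq> closure (p ` {0..<1})"
    by (rule image_closure_subset) (auto intro: closure_subset[THEN subsetD])
  then show ?thesis
    unfolding arc_minus_finish_eq[OF assms] by (auto simp: pathfinish_def)
qed

lemma connected_inside_or_outside:
  fixes C :: "'a::real_normed_vector set"
  assumes "connected K" "K \<inter> C = {}" "closed C"
  shows "K \<subseteq> inside C \<or> K \<subseteq> outside C"
proof -
  have "K \<subseteq> inside C \<union> outside C"
    using assms(2) by (auto simp: inside_outside)
  moreover have "inside C \<inter> K = {} \<or> outside C \<inter> K = {}"
    by (rule connectedD[OF assms(1) open_inside[OF assms(3)] open_outside[OF assms(3)]])
       (use calculation inside_Int_outside in blast)+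
  ultimately show ?thesis by blast
qed

lemma closure_inside_disjoint:
  fixes C :: "'a::real_normed_vector set"
  assumes "closed C" "K \<subseteq> inside C" "X \<inter> C = {}" "X \<inter> inside C = {}"
  shows "closure K \<inter> X = {}"
  using closure_mono[OF assms(2)] closure_inside_subset[OF assms(1)] assms(3,4) by blast

lemma closure_outside_disjoint:
  fixes C :: "'a::real_normed_vector set"
  assumes "closed C" "K \<subseteq> outside C" "X \<inter> C = {}" "X \<inter> outside C = {}"
  shows "closure K \<inter> X = {}"
  using closure_mono[OF assms(2)] closure_outside_subset[OF assms(1)] assms(3,4) by blast

lemma compact_Un_inside:
  fixes C :: "'a::euclidean_space set"
  assumes "closed C" "bounded C"
  shows "compact (C \<union> inside C)"
proof -
  have "closed (C \<union> inside C)"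
    using open_outside[OF assms(1)] by (simp add: union_with_inside closed_Compl)
  moreover have "bounded (C \<union> inside C)"
    using assms(2) bounded_inside by auto
  ultimately show ?thesis
    by (simp add: compact_eq_bounded_closed)
qed

lemma connected_unbounded_subset_outside:
  fixes C :: "'a::{real_normed_vector, perfect_space} set"
  assumes "connected K" "\<not> bounded K" "K \<inter> C = {}" "closed C" "bounded C"
  shows "K \<subseteq> outside C"
  using connected_inside_or_outside[OF assms(1,3,4)] bounded_inside[OF assms(5)] bounded_subset assms(2)
  by blast

lemma Jordan_two_arcs:
  fixes p q :: "real \<Rightarrow> complex"
  assumes "arc p" "arc q" "pathstart q = pathstart p" "pathfinish q = pathfinish p"
    and "path_image p \<inter> path_image q = {pathstart p, pathfinish p}"
  defines "C \<equiv> path_image p \<union> path_image q"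
  shows "closed C" "bounded C" "inside C \<noteq> {}"
    "connected (inside C)" "connected (outside C)" "frontier (inside C) = C"
proof -
  let ?c = "p +++ reversepath q"
  have "simple_path ?c"
    using assms by (subst simple_path_join_loop_eq) (auto simp: arc_reversepath)
  moreover have "pathfinish ?c = pathstart ?c" using assms by simp
  moreover have "path_image ?c = C" using assms by (simp add: path_image_join)
  ultimately show "closed C" "bounded C" "inside C \<noteq> {}"
    "connected (inside C)" "connected (outside C)" "frontier (inside C) = C"
    using Jordan_inside_outside[of ?c] closed_simple_path_image bounded_simple_path_image by metis+
qed

locale theta_curve =
  fixes a b :: complex and p q r :: "real \<Rightarrow> complex"
  assumes arcs: "arc p" "arc q" "arc r"
    and starts: "pathstart p = a" "pathstart q = a" "pathstart r = a"
    and finishes: "pathfinish p = b" "pathfinish q = b" "pathfinish r = b"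
    and meet_pq: "path_image p \<inter> path_image q = {a, b}"
    and meet_pr: "path_image p \<inter> path_image r = {a, b}"
    and meet_qr: "path_image q \<inter> path_image r = {a, b}"
begin

lemma permute:
  "theta_curve a b q p r" "theta_curve a b p r q" "theta_curve a b q r p"
  "theta_curve a b r p q" "theta_curve a b r q p"
  using arcs starts finishes meet_pq meet_pr meet_qr
  unfolding theta_curve_def by (auto simp: Int_commute)

lemma ends_distinct: "a \<noteq> b"
  using arc_distinct_ends[OF arcs(1)] starts finishes by simp

lemma connected_interior: "connected (path_image p - {a, b})"
  using connected_arc_interior[OF arcs(1)] starts finishes by simp

lemma interior_nonempty: "path_image p - {a, b} \<noteq> {}"
  using arc_interior_nonempty[OF arcs(1)] starts finishes by simp

lemma Jordan_pq:
  defines "C \<equiv> path_image p \<union> path_image q"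
  shows "closed C" "bounded C" "inside C \<noteq> {}"
    "connected (inside C)" "connected (outside C)" "frontier (inside C) = C"
  unfolding C_def using Jordan_two_arcs[OF arcs(1,2)] starts finishes meet_pq by simp_all

lemma interior_inside_or_outside:
  "path_image r - {a, b} \<subseteq> inside (path_image p \<union> path_image q)
   \<or> path_image r - {a, b} \<subseteq> outside (path_image p \<union> path_image q)"
  by (rule connected_inside_or_outside[OF theta_curve.connected_interior[OF permute(4)] _ Jordan_pq(1)])
     (use meet_pr meet_qr in blast)

lemma inside_in_outside:
  assumes r_out: "path_image r - {a, b} \<subseteq> outside (path_image p \<union> path_image q)"
    and q_out: "path_image q - {a, b} \<subseteq> outside (path_image p \<union> path_image r)"
  shows "inside (path_image p \<union> path_image q) \<subseteq> outside (path_image p \<union> path_image r)"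
proof -
  let ?U = "inside (path_image p \<union> path_image q)" and ?D = "path_image p \<union> path_image r"
  let ?C = "path_image p \<union> path_image q"
  have "path_image r \<subseteq> outside ?C \<union> ?C"
    using r_out meet_pq by auto
  then have "?U \<inter> ?D = {}"
    using inside_no_overlap[of ?C] inside_Int_outside[of ?C] by blast
  then have "?U \<subseteq> inside ?D \<or> ?U \<subseteq> outside ?D"
    by (rule connected_inside_or_outside[OF Jordan_pq(4) _ theta_curve.Jordan_pq(1)[OF permute(2)]])
  moreover have "\<not> ?U \<subseteq> inside ?D"
  proof
    assume "?U \<subseteq> inside ?D"
    then have "closure ?U \<subseteq> ?D \<union> inside ?D"
      using closure_mono[of ?U "inside ?D"] closure_inside_subset[OF theta_curve.Jordan_pq(1)[OF permute(2)]]
      by blast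
    moreover have "path_image q - {a, b} \<subseteq> closure ?U"
      using Jordan_pq(6) by (auto simp: frontier_def)
    moreover have "(path_image q - {a, b}) \<inter> ?D = {}"
      using meet_pq meet_qr by auto
    ultimately have "path_image q - {a, b} \<subseteq> inside ?D"
      by blast
    then show False
      using q_out theta_curve.interior_nonempty[OF permute(1)] inside_Int_outside[of ?D]
      by blast
  qed
  ultimately show ?thesis by blast
qed

lemma not_all_interiors_outside:
  assumes r_out: "path_image r - {a, b} \<subseteq> outside (path_image p \<union> path_image q)"
    and q_out: "path_image q - {a, b} \<subseteq> outside (path_image p \<union> path_image r)"
    and p_out: "path_image p - {a, b} \<subseteq> outside (path_image q \<union> path_image r)"
  shows False
proof -
  let ?Cpq = "path_image p \<union> path_image q" and ?Cpr = "path_image p \<union> path_image r"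
    and ?Cqr = "path_image q \<union> path_image r"
  have comm: "path_image q \<union> path_image p = ?Cpq" "path_image r \<union> path_image p = ?Cpr"
    "path_image r \<union> path_image q = ?Cqr" by auto
  note Jpq = Jordan_pq and Jpr = theta_curve.Jordan_pq[OF permute(2)]
    and Jqr = theta_curve.Jordan_pq[OF permute(3)]
  have pq_pr: "inside ?Cpq \<subseteq> outside ?Cpr"
    by (rule inside_in_outside[OF r_out q_out])
  have qr_pq: "inside ?Cqr \<subseteq> outside ?Cpq"
    using theta_curve.inside_in_outside[OF permute(3), unfolded comm] p_out r_out by blast
  have qr_pr: "inside ?Cqr \<subseteq> outside ?Cpr"
    using theta_curve.inside_in_outside[OF permute(5), unfolded comm] p_out q_out by blast
  define S where "S = ?Cpq \<union> inside ?Cpq"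
  define T where "T = ?Cpr \<union> inside ?Cpr"
  have S: "- S = outside ?Cpq" and T: "- T = outside ?Cpr"
    unfolding S_def T_def union_with_inside by simp_all
  have "compact S" "compact T"
    unfolding S_def T_def using compact_Un_inside Jpq(1,2) Jpr(1,2) by blast+
  have "path_image q \<inter> inside ?Cpr = {}"
    using q_out meet_pq inside_no_overlap[of ?Cpr] inside_Int_outside[of ?Cpr] by blast
  moreover have "path_image r \<inter> inside ?Cpq = {}"
    using r_out meet_pq inside_no_overlap[of ?Cpq] inside_Int_outside[of ?Cpq] by blast
  moreover have "inside ?Cpq \<inter> inside ?Cpr = {}"
    using pq_pr inside_Int_outside[of ?Cpr] by blast
  moreover have "path_image q \<inter> path_image r \<subseteq> path_image p"
    using meet_pq meet_qr by blast
  ultimately have "S \<inter> T = path_image p"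
    unfolding S_def T_def by blast
  \<comment> \<open>By Janiszewski's theorem the common exterior of the cycles p-q and p-r is connected; it is
    unbounded and avoids q and r, hence lies outside the cycle q-r, although it contains its inside.\<close>
  then have "connected (- (S \<union> T))"
    using Janiszewski_connected[of S T] \<open>compact S\<close> \<open>compact T\<close> Jpq(5) Jpr(5) S T
      connected_arc_image[OF arcs(1)] by (simp add: compact_imp_closed)
  moreover have "\<not> bounded (- (S \<union> T))"
    using \<open>compact S\<close> \<open>compact T\<close>
    by (metis compact_Un compact_imp_bounded cobounded_imp_unbounded double_compl)
  moreover have "- (S \<union> T) \<inter> ?Cqr = {}"
    unfolding S_def T_def by blast
  ultimately have "- (S \<union> T) \<subseteq> outside ?Cqr"
    using connected_unbounded_subset_outside Jqr(1,2) by blast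
  moreover have "inside ?Cqr \<subseteq> - (S \<union> T)"
    using qr_pq qr_pr S T by blast
  ultimately show False
    using Jqr(3) inside_Int_outside[of ?Cqr] by blast
qed

lemma some_interior_inside:
  "path_image r - {a, b} \<subseteq> inside (path_image p \<union> path_image q)
   \<or> path_image q - {a, b} \<subseteq> inside (path_image p \<union> path_image r)
   \<or> path_image p - {a, b} \<subseteq> inside (path_image q \<union> path_image r)"
  using interior_inside_or_outside theta_curve.interior_inside_or_outside[OF permute(2)]
    theta_curve.interior_inside_or_outside[OF permute(3)] not_all_interiors_outside
  by blast

lemma closure_misses_an_interior_if_inside:
  assumes r_in: "path_image r - {a, b} \<subseteq> inside (path_image p \<union> path_image q)"
    and K: "connected K" "K \<inter> (path_image p \<union> path_image q \<union> path_image r) = {}"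
  shows "closure K \<inter> (path_image p - {a, b}) = {} \<or> closure K \<inter> (path_image q - {a, b}) = {}
    \<or> closure K \<inter> (path_image r - {a, b}) = {}"
proof -
  let ?Cpq = "path_image p \<union> path_image q" and ?Cpr = "path_image p \<union> path_image r"
    and ?Cqr = "path_image q \<union> path_image r"
  note Jpq = Jordan_pq and Jpr = theta_curve.Jordan_pq[OF permute(2)]
    and Jqr = theta_curve.Jordan_pq[OF permute(3)]
  obtain split_disj: "inside ?Cpr \<inter> inside ?Cqr = {}"
    and split_eq: "inside ?Cpr \<union> inside ?Cqr \<union> (path_image r - {a, b}) = inside ?Cpq"
    by (rule split_inside_simple_closed_curve[of p a b q r])
       (use arcs starts finishes ends_distinct meet_pq meet_pr meet_qr r_in
          theta_curve.interior_nonempty[OF permute(4)] in \<open>auto simp: arc_imp_simple_path\<close>)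
  have "K \<subseteq> inside ?Cpq \<or> K \<subseteq> outside ?Cpq"
    using connected_inside_or_outside[OF K(1) _ Jpq(1)] K(2) by blast
  then show ?thesis
  proof
    assume "K \<subseteq> outside ?Cpq"
    then have "closure K \<inter> (path_image r - {a, b}) = {}"
    proof (rule closure_outside_disjoint[OF Jpq(1)])
      show "(path_image r - {a, b}) \<inter> ?Cpq = {}"
        using meet_pr meet_qr by auto
      show "(path_image r - {a, b}) \<inter> outside ?Cpq = {}"
        using r_in inside_Int_outside[of ?Cpq] by blast
    qed
    then show ?thesis by blast
  next
    assume "K \<subseteq> inside ?Cpq"
    then have "K \<subseteq> inside ?Cpr \<union> inside ?Cqr"
      using split_eq K(2) by blast
    moreover have "inside ?Cpr \<inter> K = {} \<or> inside ?Cqr \<inter> K = {}"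
      by (rule connectedD[OF K(1) open_inside[OF Jpr(1)] open_inside[OF Jqr(1)]])
         (use split_disj calculation in blast)+
    ultimately have "K \<subseteq> inside ?Cqr \<or> K \<subseteq> inside ?Cpr"
      by blast
    moreover have "(path_image p - {a, b}) \<inter> ?Cqr = {}" "(path_image q - {a, b}) \<inter> ?Cpr = {}"
      using meet_pq meet_pr meet_qr by auto
    moreover have "inside ?Cpr \<inter> ?Cpq = {}" "inside ?Cqr \<inter> ?Cpq = {}"
      using split_eq inside_no_overlap[of ?Cpq] by blast+
    ultimately show ?thesis
      using closure_inside_disjoint[OF Jqr(1), of K "path_image p - {a, b}"]
        closure_inside_disjoint[OF Jpr(1), of K "path_image q - {a, b}"] by blast
  qed
qed

lemma closure_misses_an_interior:
  assumes "connected K" "K \<inter> (path_image p \<union> path_image q \<union> path_image r) = {}"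
  shows "closure K \<inter> (path_image p - {a, b}) = {} \<or> closure K \<inter> (path_image q - {a, b}) = {}
    \<or> closure K \<inter> (path_image r - {a, b}) = {}"
proof -
  have K: "K \<inter> (path_image p \<union> path_image r \<union> path_image q) = {}"
    "K \<inter> (path_image q \<union> path_image r \<union> path_image p) = {}"
    using assms(2) by blast+
  from some_interior_inside show ?thesis
  proof (elim disjE)
    assume "path_image r - {a, b} \<subseteq> inside (path_image p \<union> path_image q)"
    then show ?thesis
      by (rule closure_misses_an_interior_if_inside[OF _ assms])
  next
    assume "path_image q - {a, b} \<subseteq> inside (path_image p \<union> path_image r)"
    then show ?thesis
      using theta_curve.closure_misses_an_interior_if_inside[OF permute(2) _ assms(1) K(1)] by blast
  next
    assume "path_image p - {a, b} \<subseteq> inside (path_image q \<union> path_image r)"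
    then show ?thesis
      using theta_curve.closure_misses_an_interior_if_inside[OF permute(3) _ assms(1) K(2)] by blast
  qed
qed

end

lemma no_plane_K33:
  fixes A B :: "nat \<Rightarrow> complex" and \<gamma> :: "nat \<Rightarrow> nat \<Rightarrow> real \<Rightarrow> complex"
  assumes arc_ij: "\<And>i j. i < 3 \<Longrightarrow> j < 3 \<Longrightarrow>
      arc (\<gamma> i j) \<and> pathstart (\<gamma> i j) = A i \<and> pathfinish (\<gamma> i j) = B j"
    and meet_ij: "\<And>i j i' j'. i < 3 \<Longrightarrow> j < 3 \<Longrightarrow> i' < 3 \<Longrightarrow> j' < 3 \<Longrightarrow> (i, j) \<noteq> (i', j') \<Longrightarrow>
      path_image (\<gamma> i j) \<inter> path_image (\<gamma> i' j')
        \<subseteq> (if i = i' then {A i} else {}) \<union> (if j = j' then {B j} else {})"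
  shows False
proof -
  have ends: "A i \<in> path_image (\<gamma> i j)" "B j \<in> path_image (\<gamma> i j)" "A i \<noteq> B j"
    if "i < 3" "j < 3" for i j
    using arc_ij[OF that] pathstart_in_path_image[of "\<gamma> i j"] pathfinish_in_path_image[of "\<gamma> i j"]
      arc_distinct_ends[of "\<gamma> i j"] by auto
  define P where "P l = \<gamma> 0 l +++ reversepath (\<gamma> 1 l)" for l
  have P: "arc (P l) \<and> pathstart (P l) = A 0 \<and> pathfinish (P l) = A 1
      \<and> path_image (P l) = path_image (\<gamma> 0 l) \<union> path_image (\<gamma> 1 l)" if "l < 3" for l
  proof -
    have "arc (P l)"
      unfolding P_def using arc_ij[of 0 l] arc_ij[of 1 l] meet_ij[of 0 l 1 l] that
      by (intro arc_join) (auto simp: arc_reversepath)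
    then show ?thesis
      using arc_ij[of 0 l] arc_ij[of 1 l] that by (simp add: P_def path_image_join)
  qed
  have P_meet: "path_image (P l) \<inter> path_image (P l') = {A 0, A 1}"
    if "l < 3" "l' < 3" "l \<noteq> l'" for l l'
  proof
    show "path_image (P l) \<inter> path_image (P l') \<subseteq> {A 0, A 1}"
      using P[of l] P[of l'] meet_ij[of 0 l 0 l'] meet_ij[of 0 l 1 l'] meet_ij[of 1 l 0 l']
        meet_ij[of 1 l 1 l'] that by auto
    show "{A 0, A 1} \<subseteq> path_image (P l) \<inter> path_image (P l')"
      using P[of l] P[of l'] ends[of 0 l] ends[of 0 l'] ends[of 1 l] ends[of 1 l'] that by auto
  qed
  interpret theta_curve "A 0" "A 1" "P 0" "P 1" "P 2"
    using P[of 0] P[of 1] P[of 2] P_meet[of 0 1] P_meet[of 0 2] P_meet[of 1 2]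
    by unfold_locales simp_all
  \<comment> \<open>The star at A 2 avoids the theta curve but accumulates at a point of each of its open arcs.\<close>
  define K where "K = (\<Union>j<3. path_image (\<gamma> 2 j) - {B j})"
  have "connected K"
    unfolding K_def
  proof (rule connected_Union)
    show "connected X" if "X \<in> (\<lambda>j. path_image (\<gamma> 2 j) - {B j}) ` {..<3}" for X
    proof -
      from that obtain j where "j < 3" "X = path_image (\<gamma> 2 j) - {B j}" by auto
      then show ?thesis using connected_arc_minus_finish[of "\<gamma> 2 j"] arc_ij[of 2 j] by simp
    qed
    have "A 2 \<in> \<Inter> ((\<lambda>j. path_image (\<gamma> 2 j) - {B j}) ` {..<3})"
      using ends[of 2] by auto
    then show "\<Inter> ((\<lambda>j. path_image (\<gamma> 2 j) - {B j}) ` {..<3}) \<noteq> {}"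
      by blast
  qed
  moreover have "K \<inter> (path_image (P 0) \<union> path_image (P 1) \<union> path_image (P 2)) = {}"
  proof -
    have avoid: "(path_image (\<gamma> 2 j) - {B j}) \<inter> (path_image (\<gamma> 0 l) \<union> path_image (\<gamma> 1 l)) = {}"
      if "j < 3" "l < 3" for j l
      using meet_ij[of 2 j 0 l] meet_ij[of 2 j 1 l] that by (auto split: if_splits)
    have "K \<inter> path_image (P l) = {}" if "l < 3" for l
      unfolding K_def using P[OF that] avoid[OF _ that] by blast
    then show ?thesis
      by (simp add: Int_Un_distrib)
  qed
  ultimately have "closure K \<inter> (path_image (P 0) - {A 0, A 1}) = {}
      \<or> closure K \<inter> (path_image (P 1) - {A 0, A 1}) = {}
      \<or> closure K \<inter> (path_image (P 2) - {A 0, A 1}) = {}"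
    by (rule closure_misses_an_interior)
  then obtain l where "l < 3" and l: "closure K \<inter> (path_image (P l) - {A 0, A 1}) = {}"
    using that[of 0] that[of 1] that[of 2] by auto
  have star_l: "path_image (\<gamma> 2 l) - {B l} \<subseteq> K"
    unfolding K_def using \<open>l < 3\<close> by blast
  have "B l \<in> closure K"
    using closure_mono[OF star_l] arc_finish_in_closure[of "\<gamma> 2 l"] arc_ij[of 2 l] \<open>l < 3\<close> by auto
  moreover have "B l \<in> path_image (P l) - {A 0, A 1}"
    using P[of l] ends[of 0 l] ends[of 1 l] \<open>l < 3\<close> by auto
  ultimately show False
    using l by blast
qed

definition edge_arc :: "('b \<Rightarrow> complex) \<Rightarrow> ('b set \<Rightarrow> real \<Rightarrow> complex) \<Rightarrow> 'b \<Rightarrow> 'b \<Rightarrow> real \<Rightarrow> complex" where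
  "edge_arc f g u v = (if pathstart (g {u, v}) = f u then g {u, v} else reversepath (g {u, v}))"

fun walk_edges :: "'b list \<Rightarrow> 'b set set" where
  "walk_edges (u # v # vs) = insert {u, v} (walk_edges (v # vs))"
| "walk_edges _ = {}"

fun walk_arc :: "('b \<Rightarrow> complex) \<Rightarrow> ('b set \<Rightarrow> real \<Rightarrow> complex) \<Rightarrow> 'b list \<Rightarrow> real \<Rightarrow> complex" where
  "walk_arc f g [u, v] = edge_arc f g u v"
| "walk_arc f g (u # v # w # vs) = edge_arc f g u v +++ walk_arc f g (v # w # vs)"
| "walk_arc f g _ = linepath 0 0"

lemma walk_edges_subset: "e \<in> walk_edges vs \<Longrightarrow> e \<subseteq> set vs"
  by (induction vs rule: walk_edges.induct) auto

lemma walk_edges_doubleton: "distinct vs \<Longrightarrow> e \<in> walk_edges vs \<Longrightarrow> \<exists>u v. e = {u, v} \<and> u \<noteq> v"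
  by (induction vs rule: walk_edges.induct) auto

lemma walk_edges_graph_edges:
  "set vs \<subseteq> W \<Longrightarrow> successively R vs \<Longrightarrow> walk_edges vs \<subseteq> graph_edges W R"
  by (induction vs rule: walk_edges.induct) (auto simp: graph_edges_def)

locale plane_drawing =
  fixes W :: "'b set" and R :: "'b \<Rightarrow> 'b \<Rightarrow> bool"
    and f :: "'b \<Rightarrow> complex" and g :: "'b set \<Rightarrow> real \<Rightarrow> complex"
  assumes inj_f: "inj_on f W"
    and edges: "\<forall>u\<in>W. \<forall>v\<in>W. R u v \<longrightarrow>
      arc (g {u, v}) \<and> {pathstart (g {u, v}), pathfinish (g {u, v})} = {f u, f v}
      \<and> path_image (g {u, v}) \<inter> f ` W = {f u, f v}"
    and crossings: "\<forall>e\<in>graph_edges W R. \<forall>e'\<in>graph_edges W R. e \<noteq> e' \<longrightarrow>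
      path_image (g e) \<inter> path_image (g e') \<subseteq> f ` (e \<inter> e')"
begin

lemma edge_arc_joins:
  assumes "u \<in> W" "v \<in> W" "R u v" "u \<noteq> v"
  shows "arc (edge_arc f g u v) \<and> pathstart (edge_arc f g u v) = f u
    \<and> pathfinish (edge_arc f g u v) = f v \<and> path_image (edge_arc f g u v) = path_image (g {u, v})"
proof -
  have e: "arc (g {u, v})" "{pathstart (g {u, v}), pathfinish (g {u, v})} = {f u, f v}"
    using edges assms(1-3) by auto
  have "f u \<noteq> f v"
    using inj_f assms by (auto dest: inj_onD)
  then show ?thesis
    using e by (auto simp: edge_arc_def arc_reversepath doubleton_eq_iff)
qed

lemma walk_arc_joins:
  assumes "distinct vs" "set vs \<subseteq> W" "successively R vs" "2 \<le> length vs"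
  shows "arc (walk_arc f g vs) \<and> pathstart (walk_arc f g vs) = f (hd vs)
    \<and> pathfinish (walk_arc f g vs) = f (last vs)
    \<and> path_image (walk_arc f g vs) = (\<Union>e\<in>walk_edges vs. path_image (g e))"
  using assms
proof (induction vs rule: walk_edges.induct)
  case (1 u v vs)
  show ?case
  proof (cases vs)
    case Nil
    then show ?thesis using 1 edge_arc_joins[of u v] by auto
  next
    case (Cons w ws)
    let ?rest = "v # w # ws"
    have IH: "arc (walk_arc f g ?rest)" "pathstart (walk_arc f g ?rest) = f v"
      "pathfinish (walk_arc f g ?rest) = f (last ?rest)"
      "path_image (walk_arc f g ?rest) = (\<Union>e\<in>walk_edges ?rest. path_image (g e))"
      using 1 Cons by auto
    have uv: "arc (edge_arc f g u v)" "pathstart (edge_arc f g u v) = f u"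
      "pathfinish (edge_arc f g u v) = f v" "path_image (edge_arc f g u v) = path_image (g {u, v})"
      using 1 Cons edge_arc_joins[of u v] by auto
    have walk_in_graph: "walk_edges (u # ?rest) \<subseteq> graph_edges W R"
      using 1 Cons by (intro walk_edges_graph_edges) auto
    have "path_image (g {u, v}) \<inter> path_image (g e) \<subseteq> {f v}" if e: "e \<in> walk_edges ?rest" for e
    proof -
      have "u \<notin> e"
        using walk_edges_subset[OF e] 1(2) Cons by auto
      moreover have "{u, v} \<in> graph_edges W R" "e \<in> graph_edges W R"
        using walk_in_graph e by auto
      ultimately have "path_image (g {u, v}) \<inter> path_image (g e) \<subseteq> f ` ({u, v} \<inter> e)"
        using crossings by blast
      then show ?thesis
        using \<open>u \<notin> e\<close> by auto
    qed
    then have "path_image (edge_arc f g u v) \<inter> path_image (walk_arc f g ?rest) \<subseteq> {f v}"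
      unfolding uv(4) IH(4) by blast
    then have "arc (edge_arc f g u v +++ walk_arc f g ?rest)"
      using arc_join[OF uv(1) IH(1)] uv(3) IH(2) by simp
    then show ?thesis
      using uv IH Cons by (simp add: path_image_join)
  qed
qed auto

lemma walk_arcs_meet:
  assumes vs: "distinct vs" "set vs \<subseteq> W" "successively R vs" "2 \<le> length vs"
    and ws: "distinct ws" "set ws \<subseteq> W" "successively R ws" "2 \<le> length ws"
    and common: "set vs \<inter> set ws \<subseteq> {x}"
  shows "path_image (walk_arc f g vs) \<inter> path_image (walk_arc f g ws) \<subseteq> f ` (set vs \<inter> set ws)"
proof
  fix y assume "y \<in> path_image (walk_arc f g vs) \<inter> path_image (walk_arc f g ws)"
  then obtain e e' where e: "e \<in> walk_edges vs" "e' \<in> walk_edges ws"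
    and y: "y \<in> path_image (g e)" "y \<in> path_image (g e')"
    using walk_arc_joins[OF vs] walk_arc_joins[OF ws] by auto
  have "e \<noteq> e'"
  proof
    assume "e = e'"
    then have "e \<subseteq> set vs \<inter> set ws"
      using e walk_edges_subset by blast
    moreover obtain u v where "e = {u, v}" "u \<noteq> v"
      using walk_edges_doubleton[OF vs(1) e(1)] by auto
    ultimately show False
      using common by auto
  qed
  moreover have "e \<in> graph_edges W R" "e' \<in> graph_edges W R"
    using e walk_edges_graph_edges vs ws by blast+
  ultimately have "y \<in> f ` (e \<inter> e')"
    using crossings y by blast
  then show "y \<in> f ` (set vs \<inter> set ws)"
    using e walk_edges_subset by blast
qed

end

lemma planar_iff_plane_drawing: "planar W R \<longleftrightarrow> (\<exists>f g. plane_drawing W R f g)"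
  unfolding planar_def plane_drawing_def ..

lemma planar_no_K33_subdivision:
  fixes a b :: "nat \<Rightarrow> 'b" and L :: "nat \<Rightarrow> nat \<Rightarrow> 'b list"
  assumes "planar W R"
    and walks: "\<And>i j. i < 3 \<Longrightarrow> j < 3 \<Longrightarrow> distinct (L i j) \<and> set (L i j) \<subseteq> W
      \<and> successively R (L i j) \<and> 2 \<le> length (L i j) \<and> hd (L i j) = a i \<and> last (L i j) = b j"
    and disjoint: "\<And>i j i' j'. i < 3 \<Longrightarrow> j < 3 \<Longrightarrow> i' < 3 \<Longrightarrow> j' < 3 \<Longrightarrow> (i, j) \<noteq> (i', j') \<Longrightarrow>
      set (L i j) \<inter> set (L i' j') \<subseteq> (if i = i' then {a i} else {}) \<union> (if j = j' then {b j} else {})"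
  shows False
proof -
  obtain f g where "plane_drawing W R f g"
    using assms(1) planar_iff_plane_drawing by blast
  then interpret plane_drawing W R f g .
  show False
  proof (rule no_plane_K33[where \<gamma> = "\<lambda>i j. walk_arc f g (L i j)" and A = "\<lambda>i. f (a i)" and B = "\<lambda>j. f (b j)"])
    fix i j :: nat assume "i < 3" "j < 3"
    then show "arc (walk_arc f g (L i j)) \<and> pathstart (walk_arc f g (L i j)) = f (a i)
      \<and> pathfinish (walk_arc f g (L i j)) = f (b j)"
      using walk_arc_joins[of "L i j"] walks by simp
  next
    fix i j i' j' :: nat assume ij: "i < 3" "j < 3" "i' < 3" "j' < 3" "(i, j) \<noteq> (i', j')"
    let ?ends = "(if i = i' then {a i} else {}) \<union> (if j = j' then {b j} else {})"
    have common: "set (L i j) \<inter> set (L i' j') \<subseteq> ?ends"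
      by (rule disjoint[OF ij])
    moreover have "?ends \<subseteq> {if i = i' then a i else b j}"
      using ij(5) by auto
    ultimately have "set (L i j) \<inter> set (L i' j') \<subseteq> {if i = i' then a i else b j}"
      by (rule order_trans)
    then have "path_image (walk_arc f g (L i j)) \<inter> path_image (walk_arc f g (L i' j'))
        \<subseteq> f ` (set (L i j) \<inter> set (L i' j'))"
      using walks[OF ij(1,2)] walks[OF ij(3,4)] by (intro walk_arcs_meet) auto
    also have "\<dots> \<subseteq> f ` ?ends"
      using common by (rule image_mono)
    finally show "path_image (walk_arc f g (L i j)) \<inter> path_image (walk_arc f g (L i' j'))
      \<subseteq> (if i = i' then {f (a i)} else {}) \<union> (if j = j' then {f (b j)} else {})"
      by (auto split: if_splits)
  qed
qed

definition path7_token_adj :: "nat set \<Rightarrow> nat set \<Rightarrow> bool" where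
  "path7_token_adj A B \<longleftrightarrow> (\<exists>i\<in>{0..<6}. (A - B) \<union> (B - A) = {i, Suc i})"

definition K33_left :: "nat \<Rightarrow> nat set" where
  "K33_left i = [{1,2,5}, {0,2,5}, {1,3,4}] ! i"

definition K33_right :: "nat \<Rightarrow> nat set" where
  "K33_right j = [{1,3,5}, {1,2,6}, {1,2,4}] ! j"

definition K33_route :: "nat \<Rightarrow> nat \<Rightarrow> nat set list" where
  "K33_route i j =
    [[[{1,2,5}, {1,3,5}], [{1,2,5}, {1,2,6}], [{1,2,5}, {1,2,4}]],
     [[{0,2,5}, {0,3,5}, {1,3,5}], [{0,2,5}, {0,2,6}, {1,2,6}], [{0,2,5}, {0,2,4}, {1,2,4}]],
     [[{1,3,4}, {1,3,5}], [{1,3,4}, {2,3,4}, {2,3,5}, {2,3,6}, {1,3,6}, {1,2,6}], [{1,3,4}, {1,2,4}]]]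
    ! i ! j"

lemma K33_route_is_walk:
  assumes "i < 3" "j < 3"
  shows "distinct (K33_route i j)" "\<forall>A\<in>set (K33_route i j). A \<subseteq> {0..<7} \<and> card A = 3"
    "successively path7_token_adj (K33_route i j)" "2 \<le> length (K33_route i j)"
    "hd (K33_route i j) = K33_left i" "last (K33_route i j) = K33_right j"
proof -
  have "\<forall>i\<in>{0..<3}. \<forall>j\<in>{0..<3}. distinct (K33_route i j)
    \<and> (\<forall>A\<in>set (K33_route i j). A \<subseteq> {0..<7} \<and> card A = 3)
    \<and> successively path7_token_adj (K33_route i j) \<and> 2 \<le> length (K33_route i j)
    \<and> hd (K33_route i j) = K33_left i \<and> last (K33_route i j) = K33_right j"
    unfolding K33_route_def K33_left_def K33_right_def path7_token_adj_def by code_simp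
  then show "distinct (K33_route i j)" "\<forall>A\<in>set (K33_route i j). A \<subseteq> {0..<7} \<and> card A = 3"
    "successively path7_token_adj (K33_route i j)" "2 \<le> length (K33_route i j)"
    "hd (K33_route i j) = K33_left i" "last (K33_route i j) = K33_right j"
    using assms by auto
qed

lemma K33_routes_meet:
  assumes "i < 3" "j < 3" "i' < 3" "j' < 3" "(i, j) \<noteq> (i', j')"
  shows "set (K33_route i j) \<inter> set (K33_route i' j')
    \<subseteq> (if i = i' then {K33_left i} else {}) \<union> (if j = j' then {K33_right j} else {})"
proof -
  have "\<forall>i\<in>{0..<3}. \<forall>j\<in>{0..<3}. \<forall>i'\<in>{0..<3}. \<forall>j'\<in>{0..<3}. (i, j) \<noteq> (i', j') \<longrightarrow>
    set (K33_route i j) \<inter> set (K33_route i' j')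
      \<subseteq> (if i = i' then {K33_left i} else {}) \<union> (if j = j' then {K33_right j} else {})"
    unfolding K33_route_def K33_left_def K33_right_def by code_simp
  then show ?thesis
    using assms by auto
qed

lemma nonplanar_if_path7_token_graph_embeds:
  fixes \<phi> :: "nat set \<Rightarrow> 'b"
  assumes inj: "inj_on \<phi> {A. A \<subseteq> {0..<7}}"
    and vertex: "\<And>A. A \<subseteq> {0..<7} \<Longrightarrow> card A = 3 \<Longrightarrow> \<phi> A \<in> W"
    and adj: "\<And>A B. A \<subseteq> {0..<7} \<Longrightarrow> B \<subseteq> {0..<7} \<Longrightarrow> path7_token_adj A B \<Longrightarrow> R (\<phi> A) (\<phi> B)"
  shows "\<not> planar W R"
proof
  assume "planar W R"
  then show False
  proof (rule planar_no_K33_subdivision[where L = "\<lambda>i j. map \<phi> (K33_route i j)"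
        and a = "\<lambda>i. \<phi> (K33_left i)" and b = "\<lambda>j. \<phi> (K33_right j)"])
    fix i j :: nat assume ij: "i < 3" "j < 3"
    note route = K33_route_is_walk[OF ij]
    have "inj_on \<phi> (set (K33_route i j))"
      using inj route(2) by (auto intro: inj_on_subset)
    then have "distinct (map \<phi> (K33_route i j))"
      using route(1) by (simp add: distinct_map)
    moreover have "successively R (map \<phi> (K33_route i j))"
      unfolding successively_map using route(3) by (rule successively_mono) (use route(2) adj in auto)
    moreover have "K33_route i j \<noteq> []"
      using route(4) by auto
    ultimately show "distinct (map \<phi> (K33_route i j)) \<and> set (map \<phi> (K33_route i j)) \<subseteq> W
      \<and> successively R (map \<phi> (K33_route i j)) \<and> 2 \<le> length (map \<phi> (K33_route i j))
      \<and> hd (map \<phi> (K33_route i j)) = \<phi> (K33_left i) \<and> last (map \<phi> (K33_route i j)) = \<phi> (K33_right j)"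
      using route vertex by (auto simp: hd_map last_map)
  next
    fix i j i' j' :: nat assume ij: "i < 3" "j < 3" "i' < 3" "j' < 3" "(i, j) \<noteq> (i', j')"
    have "set (K33_route i j) \<union> set (K33_route i' j') \<subseteq> {A. A \<subseteq> {0..<7}}"
      using K33_route_is_walk(2)[of i j] K33_route_is_walk(2)[of i' j'] ij by auto
    then have "set (map \<phi> (K33_route i j)) \<inter> set (map \<phi> (K33_route i' j'))
        = \<phi> ` (set (K33_route i j) \<inter> set (K33_route i' j'))"
      using inj_on_image_Int[OF inj] by simp
    also have "\<dots> \<subseteq> \<phi> ` ((if i = i' then {K33_left i} else {}) \<union> (if j = j' then {K33_right j} else {}))"
      using K33_routes_meet[OF ij] by (rule image_mono)
    finally show "set (map \<phi> (K33_route i j)) \<inter> set (map \<phi> (K33_route i' j'))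
      \<subseteq> (if i = i' then {\<phi> (K33_left i)} else {}) \<union> (if j = j' then {\<phi> (K33_right j)} else {})"
      by (auto split: if_splits)
  qed
qed

lemma image_Un_sym_diff:
  assumes "inj_on h S" "P \<subseteq> S" "Q \<subseteq> S" "T \<inter> h ` S = {}"
  shows "(h ` P \<union> T - (h ` Q \<union> T)) \<union> (h ` Q \<union> T - (h ` P \<union> T)) = h ` ((P - Q) \<union> (Q - P))"
proof -
  have "h ` P \<union> T - (h ` Q \<union> T) = h ` (P - Q)" "h ` Q \<union> T - (h ` P \<union> T) = h ` (Q - P)"
    using assms inj_on_image_set_diff[OF assms(1)] by blast+
  then show ?thesis
    by (simp add: image_Un)
qed

lemma token_graph_nonplanar_if_path7:
  fixes xs :: "'a list" and X :: "nat set \<Rightarrow> nat set"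
  assumes path: "length xs = 7" "distinct xs" "set xs \<subseteq> V" "\<And>i. Suc i < 7 \<Longrightarrow> E (xs ! i) (xs ! Suc i)"
    and T: "finite T" "T \<subseteq> V - set xs"
    and X_sub: "\<And>A. A \<subseteq> {0..<7} \<Longrightarrow> X A \<subseteq> {0..<7}"
    and X_sym_diff: "\<And>A B. A \<subseteq> {0..<7} \<Longrightarrow> B \<subseteq> {0..<7} \<Longrightarrow>
      (X A - X B) \<union> (X B - X A) = (A - B) \<union> (B - A)"
    and X_card: "\<And>A. A \<subseteq> {0..<7} \<Longrightarrow> card A = 3 \<Longrightarrow> card (X A) + card T = k"
  shows "\<not> planar (token_vertices V k) (token_adj E)"
proof -
  let ?h = "(!) xs" and ?\<phi> = "\<lambda>A. (!) xs ` X A \<union> T"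
  have inj_h: "inj_on ?h {0..<7}"
    using path(1,2) by (intro inj_on_nth) auto
  have "?h ` {0..<7} = set xs"
    using path(1) by (auto simp: set_conv_nth)
  then have T_off_path: "T \<inter> ?h ` {0..<7} = {}"
    using T(2) by auto
  have \<phi>_sym_diff: "(?\<phi> A - ?\<phi> B) \<union> (?\<phi> B - ?\<phi> A) = ?h ` ((A - B) \<union> (B - A))"
    if "A \<subseteq> {0..<7}" "B \<subseteq> {0..<7}" for A B
    using image_Un_sym_diff[OF inj_h X_sub[OF that(1)] X_sub[OF that(2)] T_off_path] X_sym_diff[OF that]
    by simp
  show ?thesis
  proof (rule nonplanar_if_path7_token_graph_embeds[where \<phi> = ?\<phi>])
    show "inj_on ?\<phi> {A. A \<subseteq> {0..<7}}"
    proof (rule inj_onI)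
      fix A B assume "A \<in> {A. A \<subseteq> {0..<7}}" "B \<in> {A. A \<subseteq> {0..<7}}" "?\<phi> A = ?\<phi> B"
      then have "?h ` ((A - B) \<union> (B - A)) = {}"
        using \<phi>_sym_diff[of A B] by simp
      then show "A = B"
        by blast
    qed
  next
    fix A :: "nat set" assume A: "A \<subseteq> {0..<7}" "card A = 3"
    have "card (?h ` X A) = card (X A)"
      using inj_h X_sub[OF A(1)] by (meson card_image inj_on_subset)
    moreover have "?h ` X A \<inter> T = {}" "finite (?h ` X A)"
      using T_off_path X_sub[OF A(1)] finite_subset by blast+
    ultimately have "card (?\<phi> A) = k"
      using X_card[OF A] T(1) by (simp add: card_Un_disjoint)
    moreover have "?\<phi> A \<subseteq> V"
      using X_sub[OF A(1)] path(1,3) T(2) by (auto simp: set_conv_nth subset_iff)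
    ultimately show "?\<phi> A \<in> token_vertices V k"
      by (simp add: token_vertices_def)
  next
    fix A B :: "nat set" assume AB: "A \<subseteq> {0..<7}" "B \<subseteq> {0..<7}" "path7_token_adj A B"
    then obtain i where "i < 6" "(A - B) \<union> (B - A) = {i, Suc i}"
      unfolding path7_token_adj_def by auto
    moreover from this have "(?\<phi> A - ?\<phi> B) \<union> (?\<phi> B - ?\<phi> A) = {xs ! i, xs ! Suc i}"
      using \<phi>_sym_diff[OF AB(1,2)] by simp
    ultimately show "token_adj E (?\<phi> A) (?\<phi> B)"
      unfolding token_adj_def using path(4)[of i] by auto
  qed
qed

theorem theorem8:
  fixes V :: "'a set" and E :: "'a \<Rightarrow> 'a \<Rightarrow> bool" and k :: nat
  assumes "simple_graph V E"
    and "3 \<le> k" and "k + 3 \<le> card V"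
    and "has_path_subgraph V E 7"
  shows "\<not> planar (token_vertices V k) (token_adj E)"
proof -
  have "finite V"
    using assms(1) by (simp add: simple_graph_def)
  obtain xs where path: "length xs = 7" "distinct xs" "set xs \<subseteq> V"
    "\<And>i. Suc i < 7 \<Longrightarrow> E (xs ! i) (xs ! Suc i)"
    using assms(4) unfolding has_path_subgraph_def by blast
  have off_path: "card (V - set xs) = card V - 7"
    using path \<open>finite V\<close> by (simp add: card_Diff_subset distinct_card finite_subset)
  show ?thesis
  proof (cases "k + 4 \<le> card V")
    case True
    then have "k - 3 \<le> card (V - set xs)"
      using off_path by arith
    then obtain T where "T \<subseteq> V - set xs" "card T = k - 3" "finite T"
      by (rule obtain_subset_with_card_n)
    then show ?thesis
      using assms(2) path by (intro token_graph_nonplanar_if_path7[where E = E and X = id]) auto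
  next
    case False
    \<comment> \<open>No room for k - 3 tokens off the path: complement within the path instead.\<close>
    have "k - 4 \<le> card (V - set xs)"
      using assms(3) off_path by arith
    then obtain T where "T \<subseteq> V - set xs" "card T = k - 4" "finite T"
      by (rule obtain_subset_with_card_n)
    moreover have "k = card V - 3" "7 \<le> card V"
      using False assms(3) card_mono[OF \<open>finite V\<close> path(3)] path(1,2) by (auto simp: distinct_card)
    ultimately show ?thesis
      using path by (intro token_graph_nonplanar_if_path7[where E = E and X = "\<lambda>A. {0..<7} - A"])
        (auto simp: card_Diff_subset finite_subset)
  qed
qed

end
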